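(* For the class $\mathcal P_m$ of envy-free item-pricing auctions with prices in $\{1/m,\dots,m/m\}^k$, the matrix $\Gamma^{\mathrm{IP}}$ is $(2,1)$-admissible and implementable with complexity $m$ (with respect to learner actions $\mathcal P_m$, adversary actions = profiles of combinatorial valuations, and payoff $f(\vec a,\vec v)=\mathrm{Rev}(\vec a,\vec v)$).
   Context: There are $k$ heterogeneous items with supplies $s_\ell\ge1$ (possibly infinite), and $n$ bidders with combinatorial valuations $v_i:\{0,1\}^k\to[0,1]$, $v_i(\vec 0)=0$. An envy-free item-pricing auction with price vector $\vec a$ considers bidders $i=1,\dots,n$ in order and gives bidder $i$ a bundle $\vec q_i\in\{0,1\}^k$ maximizing $v_i(\vec q_i)-\vec a\cdot\vec q_i$ among bundles composable from remaining supplies (ties in utility broken in favor of a bundle with larger total price), charging $\vec a\cdot\vec q_i$; $\mathrm{Rev}(\vec a,\vec v)$ is the total charge. $\mathcal P_m$: such auctions with all $a_\ell\in\{1/m,\dots,m/m\}$. $\Gamma^{\mathrm{IP}}$: the $|\mathcal P_m|\times k\lceil\log_2m\rceil$ binary matrix whose entry in row $\vec a$ and column $(\ell-1)\lceil\log_2 m\rceil+\beta$ is the $\beta$-th bit of the integer $ma_\ell$. A matrix $\Gamma$ (rows indexed by learner actions) is $(\kappa,\delta)$-admissible if its rows are distinct, each column has at most $\kappa$ distinct values and distinct values in a column differ by at least $\delta$; it is implementable with complexity $M$ if for each column $j$ there is a finite set $S_j$ of pairs $(w,y)$ ($w\ge0$, $y$ an adversary action), $|S_j|\le M$, with $\Gamma_{xj}-\Gamma_{x'j}=\sum_{(w,y)\in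 S_j}w(f(x,y)-f(x',y))$ for all learner actions $x,x'$. *)

theory Defs
  imports Complex_Main "HOL-Library.Extended_Nat"
begin

(* Items are 0..k-1, bidders 0..n-1. A bundle q in {0,1}^k is represented by
   the set of items it contains, a subset of {..<k}. *)

definition prices :: "nat \<Rightarrow> nat \<Rightarrow> (nat \<Rightarrow> real) set" where
  "prices k m = {a. (\<forall>l<k. \<exists>t\<in>{1..m}. a l = real t / real m) \<and> (\<forall>l. k \<le> l \<longrightarrow> a l = 0)}"

definition profiles :: "nat \<Rightarrow> nat \<Rightarrow> (nat \<Rightarrow> nat set \<Rightarrow> real) set" where
  "profiles n k = {v. (\<forall>i<n. v i {} = 0 \<and> (\<forall>q. q \<subseteq> {..<k} \<longrightarrow> 0 \<le> v i q \<and> v i q \<le> 1))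
      \<and> (\<forall>i q. (n \<le> i \<or> \<not> q \<subseteq> {..<k}) \<longrightarrow> v i q = 0)}"

definition bprice :: "(nat \<Rightarrow> real) \<Rightarrow> nat set \<Rightarrow> real" where
  "bprice a q = (\<Sum>l\<in>q. a l)"

definition feasible :: "nat \<Rightarrow> (nat \<Rightarrow> enat) \<Rightarrow> nat set set" where
  "feasible k r = {q. q \<subseteq> {..<k} \<and> (\<forall>l\<in>q. 1 \<le> r l)}"

definition util_opt :: "nat \<Rightarrow> (nat \<Rightarrow> real) \<Rightarrow> (nat set \<Rightarrow> real) \<Rightarrow> (nat \<Rightarrow> enat) \<Rightarrow> nat set set" where
  "util_opt k a vi r = {q \<in> feasible k r. \<forall>q'\<in>feasible k r. vi q' - bprice a q' \<le> vi q - bprice a q}"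

definition best_bundles :: "nat \<Rightarrow> (nat \<Rightarrow> real) \<Rightarrow> (nat set \<Rightarrow> real) \<Rightarrow> (nat \<Rightarrow> enat) \<Rightarrow> nat set set" where
  "best_bundles k a vi r = {q \<in> util_opt k a vi r. \<forall>q'\<in>util_opt k a vi r. bprice a q' \<le> bprice a q}"

(* state (remaining supplies, revenue so far) after bidders 0..i-1 have been served;
   sel picks one bundle among the remaining ties *)
fun auc_state :: "(nat set set \<Rightarrow> nat set) \<Rightarrow> nat \<Rightarrow> (nat \<Rightarrow> enat) \<Rightarrow> (nat \<Rightarrow> real)
     \<Rightarrow> (nat \<Rightarrow> nat set \<Rightarrow> real) \<Rightarrow> nat \<Rightarrow> (nat \<Rightarrow> enat) \<times> real" where
  "auc_state sel k s a v 0 = (s, 0)"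
| "auc_state sel k s a v (Suc i) =
     (let (r, rv) = auc_state sel k s a v i;
          q = sel (best_bundles k a (v i) r)
      in (\<lambda>l. if l \<in> q then r l - 1 else r l, rv + bprice a q))"

definition Rev :: "(nat set set \<Rightarrow> nat set) \<Rightarrow> nat \<Rightarrow> (nat \<Rightarrow> enat) \<Rightarrow> nat
     \<Rightarrow> (nat \<Rightarrow> real) \<Rightarrow> (nat \<Rightarrow> nat set \<Rightarrow> real) \<Rightarrow> real" where
  "Rev sel k s n a v = snd (auc_state sel k s a v n)"

definition bitlen :: "nat \<Rightarrow> nat" where
  "bitlen m = nat \<lceil>log 2 (real m)\<rceil>"

(* Gamma^IP with 0-based column index j = l * bitlen m + b (l < k, b < bitlen m);
   entry = b-th bit (0-based, least significant first) of the integer m * a_l *)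
definition Gamma_IP :: "nat \<Rightarrow> (nat \<Rightarrow> real) \<Rightarrow> nat \<Rightarrow> real" where
  "Gamma_IP m a j = (let L = bitlen m; l = j div L; b = j mod L
                     in real ((nat \<lfloor>real m * a l\<rfloor> div 2 ^ b) mod 2))"

definition admissible :: "'x set \<Rightarrow> nat \<Rightarrow> ('x \<Rightarrow> nat \<Rightarrow> real) \<Rightarrow> nat \<Rightarrow> real \<Rightarrow> bool" where
  "admissible X ncols G \<kappa> \<delta> \<longleftrightarrow>
     (\<forall>x\<in>X. \<forall>x'\<in>X. x \<noteq> x' \<longrightarrow> (\<exists>j<ncols. G x j \<noteq> G x' j)) \<and>
     (\<forall>j<ncols. finite ((\<lambda>x. G x j) ` X) \<and> card ((\<lambda>x. G x j) ` X) \<le> \<kappa>) \<and>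
     (\<forall>j<ncols. \<forall>x\<in>X. \<forall>x'\<in>X. G x j \<noteq> G x' j \<longrightarrow> \<delta> \<le> \<bar>G x j - G x' j\<bar>)"

definition implementable :: "'x set \<Rightarrow> 'y set \<Rightarrow> ('x \<Rightarrow> 'y \<Rightarrow> real) \<Rightarrow> nat
     \<Rightarrow> ('x \<Rightarrow> nat \<Rightarrow> real) \<Rightarrow> nat \<Rightarrow> bool" where
  "implementable X Y f ncols G M \<longleftrightarrow>
     (\<forall>j<ncols. \<exists>S :: (real \<times> 'y) set. finite S \<and> card S \<le> M \<and>
        (\<forall>(w, y)\<in>S. 0 \<le> w \<and> y \<in> Y) \<and>
        (\<forall>x\<in>X. \<forall>x'\<in>X. G x j - G x' j = (\<Sum>(w, y)\<in>S. w * (f x y - f x' y))))"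

end

theory Submission
  imports Defs
begin

text \<open>Each column of \<open>\<Gamma>\<^sup>IP\<close> is a bit of the price level \<open>u = m a\<^sub>l\<close> of a single item \<open>l\<close>.
  Admissibility holds because distinct levels in \<open>{1..m}\<close> differ in one of their lowest
  \<open>\<lceil>log\<^sub>2 m\<rceil>\<close> bits. For implementability, consider the profile in which only the first bidder
  is interested, wanting item \<open>l\<close> at value \<open>t/m\<close>: its revenue is \<open>u/m\<close> if \<open>u \<le> t\<close> and \<open>0\<close>
  otherwise. Any column \<open>g(u)\<close> with values in \<open>[0,1]\<close> is, up to the constant \<open>m\<close>, a nonnegative
  combination of these \<open>m\<close> threshold revenues, with telescoping weights.\<close>

lemma prices_level:
  assumes "a \<in> prices k m" "l < k" "1 \<le> m"
  shows "\<exists>u. 1 \<le> u \<and> u \<le> m \<and> a l = real u / real m \<and> nat \<lfloor>real m * a l\<rfloor> = u"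
proof -
  obtain u where u: "u \<in> {1..m}" "a l = real u / real m"
    using assms unfolding prices_def by blast
  then have "real m * a l = real u" using assms by simp
  then show ?thesis using u by auto
qed

lemma prices_pos:
  assumes "a \<in> prices k m" "l < k" "1 \<le> m"
  shows "0 < a l"
proof -
  obtain u where "1 \<le> u" "a l = real u / real m" using prices_level[OF assms] by blast
  then show ?thesis using assms(3) by simp
qed

lemma prices_outside: "a \<in> prices k m \<Longrightarrow> k \<le> l \<Longrightarrow> a l = 0"
  unfolding prices_def by blast

lemma bprice_nonneg:
  "a \<in> prices k m \<Longrightarrow> 1 \<le> m \<Longrightarrow> q \<subseteq> {..<k} \<Longrightarrow> 0 \<le> bprice a q"
  unfolding bprice_def by (rule sum_nonneg) (use prices_pos in fastforce)

lemma bprice_remove: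
  "q \<subseteq> {..<k} \<Longrightarrow> l \<in> q \<Longrightarrow> bprice a q = a l + bprice a (q - {l})"
  unfolding bprice_def by (meson finite_nat_iff_bounded sum.remove subset_iff)

lemma bprice_pos:
  assumes "a \<in> prices k m" "1 \<le> m" "q \<subseteq> {..<k}" "q \<noteq> {}"
  shows "0 < bprice a q"
proof -
  obtain l where l: "l \<in> q" using assms(4) by blast
  have "0 < a l" using prices_pos[OF assms(1) _ assms(2)] l assms(3) by blast
  moreover have "0 \<le> bprice a (q - {l})" using bprice_nonneg[OF assms(1,2)] assms(3) by blast
  ultimately show ?thesis using bprice_remove[OF assms(3) l] by simp
qed

lemma bprice_gt_item:
  assumes "a \<in> prices k m" "1 \<le> m" "q \<subseteq> {..<k}" "l \<in> q" "q \<noteq> {l}"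
  shows "a l < bprice a q"
  using bprice_remove[OF assms(3,4)] bprice_pos[OF assms(1,2), of "q - {l}"] assms(3-5) by auto

lemma best_bundles_eq_singleton:
  assumes "q0 \<in> feasible k r"
    and "\<And>q. q \<in> feasible k r \<Longrightarrow> q \<noteq> q0 \<Longrightarrow>
           vi q - bprice a q < vi q0 - bprice a q0 \<or>
           (vi q - bprice a q = vi q0 - bprice a q0 \<and> bprice a q < bprice a q0)"
  shows "best_bundles k a vi r = {q0}"
proof -
  have opt0: "q0 \<in> util_opt k a vi r"
    using assms unfolding util_opt_def by force
  have "q = q0 \<or> bprice a q < bprice a q0" if "q \<in> util_opt k a vi r" for q
    using that assms opt0 unfolding util_opt_def by force
  then show ?thesis
    using opt0 unfolding best_bundles_def by force
qed

lemma best_bundles_zero: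
  assumes "a \<in> prices k m" "1 \<le> m"
  shows "best_bundles k a (\<lambda>q. 0) r = {{}}"
proof (rule best_bundles_eq_singleton)
  show "{} \<in> feasible k r" unfolding feasible_def by simp
  fix q assume "q \<in> feasible k r" "q \<noteq> {}"
  then show "0 - bprice a q < 0 - bprice a {} \<or>
          (0 - bprice a q = 0 - bprice a {} \<and> bprice a q < bprice a {})"
    using bprice_pos[OF assms] unfolding feasible_def by (simp add: bprice_def)
qed

definition single_item_profile :: "nat \<Rightarrow> nat \<Rightarrow> real \<Rightarrow> nat \<Rightarrow> nat set \<Rightarrow> real" where
  "single_item_profile k l c i q = (if i = 0 \<and> l \<in> q \<and> q \<subseteq> {..<k} then c else 0)"

lemma single_item_profile_in_profiles:
  "1 \<le> n \<Longrightarrow> 0 \<le> c \<Longrightarrow> c \<le> 1 \<Longrightarrow> single_item_profile k l c \<in> profiles n k"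
  unfolding profiles_def single_item_profile_def by auto

lemma best_bundles_single_item:
  assumes "a \<in> prices k m" "1 \<le> m" "l < k" "1 \<le> r l"
  shows "best_bundles k a (single_item_profile k l c 0) r = {if a l \<le> c then {l} else {}}"
proof -
  have fl: "{l} \<in> feasible k r" and f0: "{} \<in> feasible k r"
    using assms(3,4) unfolding feasible_def by auto
  have pl: "bprice a {l} = a l" and p0: "bprice a {} = 0" by (simp_all add: bprice_def)
  have al: "0 < a l" using prices_pos assms(1-3) by blast
  have valuation: "single_item_profile k l c 0 q = (if l \<in> q then c else 0)" if "q \<in> feasible k r" for q
    using that unfolding single_item_profile_def feasible_def by simp
  have with_l: "a l < bprice a q" if "q \<in> feasible k r" "l \<in> q" "q \<noteq> {l}" for q
    using bprice_gt_item[OF assms(1,2)] that unfolding feasible_def by blast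
  have without_l: "0 < bprice a q" if "q \<in> feasible k r" "q \<noteq> {}" for q
    using bprice_pos[OF assms(1,2)] that unfolding feasible_def by blast
  show ?thesis
  proof (cases "a l \<le> c")
    case True
    have "best_bundles k a (single_item_profile k l c 0) r = {{l}}"
    proof (rule best_bundles_eq_singleton[OF fl], goal_cases)
      case (1 q)
      then consider "l \<in> q" | "l \<notin> q" "q \<noteq> {}" | "q = {}" by blast
      then show ?case
        by cases (use 1 True valuation with_l[OF 1(1)] without_l[OF 1(1)] fl f0 pl p0 al in auto)
    qed
    then show ?thesis using True by simp
  next
    case False
    have "best_bundles k a (single_item_profile k l c 0) r = {{}}"
    proof (rule best_bundles_eq_singleton[OF f0], goal_cases)
      case (1 q)
      then consider "l \<in> q" "q \<noteq> {l}" | "q = {l}" | "l \<notin> q" by blast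
      then show ?case
        by cases (use 1 False valuation with_l[OF 1(1)] without_l[OF 1(1)] fl f0 pl p0 in auto)
    qed
    then show ?thesis using False by simp
  qed
qed

lemma snd_auc_state_Suc:
  "snd (auc_state sel k s a v (Suc i)) =
     snd (auc_state sel k s a v i) + bprice a (sel (best_bundles k a (v i) (fst (auc_state sel k s a v i))))"
  by (simp add: split_beta Let_def)

lemma Rev_single_item:
  assumes "a \<in> prices k m" "1 \<le> m" "l < k" "1 \<le> s l" "1 \<le> n"
    and sel: "\<forall>B. B \<noteq> {} \<longrightarrow> sel B \<in> B"
  shows "Rev sel k s n a (single_item_profile k l c) = (if a l \<le> c then a l else 0)"
proof -
  let ?v = "single_item_profile k l c" and ?q0 = "if a l \<le> c then {l} else {}"
  have later_zero: "?v (Suc i) = (\<lambda>q. 0)" for i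
    by (auto simp: single_item_profile_def)
  have first: "sel (best_bundles k a (?v 0) s) = ?q0"
    using best_bundles_single_item[of a k m l s c, OF assms(1-4)] sel
    by (metis (full_types) empty_not_insert singletonD)
  have "snd (auc_state sel k s a ?v (Suc i)) = bprice a ?q0" for i
  proof (induction i)
    case 0
    show ?case using first by (simp add: snd_auc_state_Suc)
  next
    case (Suc i)
    have "sel {{}} = {}" using sel by blast
    then show ?case
      using Suc best_bundles_zero[OF assms(1,2)]
      by (simp only: snd_auc_state_Suc later_zero) (simp add: bprice_def)
  qed
  from this[of "n - 1"] show ?thesis
    using assms(5) unfolding Rev_def by (simp add: bprice_def)
qed

text \<open>The offset \<open>m\<close> makes \<open>W u = m (g u + m) / u\<close> decreasing, so the telescoping weights
  \<open>W t - W (t + 1)\<close> are nonnegative; it cancels in the differences that implementability uses.\<close>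

lemma threshold_weights:
  fixes g :: "nat \<Rightarrow> real"
  assumes g: "\<forall>u. 0 \<le> g u \<and> g u \<le> 1" and m: "1 \<le> m"
  shows "\<exists>w. (\<forall>t\<in>{1..m}. 0 \<le> w t) \<and>
           (\<forall>u\<in>{1..m}. (\<Sum>t\<in>{1..m}. w t * (if u \<le> t then real u / real m else 0)) = g u + real m)"
proof -
  define W where "W u = (if u \<le> m then real m * (g u + real m) / real u else 0)" for u
  define w where "w t = W t - W (Suc t)" for t
  have "0 \<le> w t" if t: "t \<in> {1..m}" for t
  proof (cases "t = m")
    case True
    then show ?thesis using g m unfolding w_def W_def by simp
  next
    case False
    then have "t < m" using t by simp
    have "real t * g (Suc t) \<le> real m + (g t + real t * g t)"
      using g \<open>t < m\<close> by (smt (verit) mult_left_le of_nat_0_le_iff of_nat_less_iff mult_nonneg_nonneg)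
    then have "(g (Suc t) + real m) / (real t + 1) \<le> (g t + real m) / real t"
      using t by (simp add: divide_simps algebra_simps)
    then have "real m * ((g (Suc t) + real m) / (real t + 1)) \<le> real m * ((g t + real m) / real t)"
      by (rule mult_left_mono) simp
    then show ?thesis using \<open>t < m\<close> unfolding w_def W_def by (simp add: add.commute)
  qed
  moreover have "(\<Sum>t\<in>{1..m}. w t * (if u \<le> t then real u / real m else 0)) = g u + real m"
    if u: "u \<in> {1..m}" for u
  proof -
    have "(\<Sum>t\<in>{1..m}. w t * (if u \<le> t then real u / real m else 0))
        = (\<Sum>t\<in>{t\<in>{1..m}. u \<le> t}. w t * (real u / real m))"
      by (subst sum.inter_filter) (auto intro: sum.cong)
    also have "{t\<in>{1..m}. u \<le> t} = {u..m}" using u by auto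
    also have "(\<Sum>t\<in>{u..m}. w t * (real u / real m)) = (\<Sum>t\<in>{u..m}. w t) * (real u / real m)"
      by (rule sum_distrib_right[symmetric])
    also have "(\<Sum>t\<in>{u..m}. w t) = - (\<Sum>t\<in>{u..m}. W (Suc t) - W t)"
      unfolding w_def by (simp add: sum_negf[symmetric])
    also have "(\<Sum>t\<in>{u..m}. W (Suc t) - W t) = W (Suc m) - W u"
      using u by (simp add: sum_Suc_diff)
    also have "- (W (Suc m) - W u) * (real u / real m) = g u + real m"
      using u unfolding W_def by simp
    finally show ?thesis .
  qed
  ultimately show ?thesis by blast
qed

lemma implementable_column:
  fixes g :: "nat \<Rightarrow> real"
  assumes m: "1 \<le> m" and n: "1 \<le> n" and l: "l < k" "1 \<le> s l"
    and sel: "\<forall>B. B \<noteq> {} \<longrightarrow> sel B \<in> B"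
    and g: "\<forall>u. 0 \<le> g u \<and> g u \<le> 1"
  shows "\<exists>S :: (real \<times> (nat \<Rightarrow> nat set \<Rightarrow> real)) set. finite S \<and> card S \<le> m \<and>
           (\<forall>(w, y)\<in>S. 0 \<le> w \<and> y \<in> profiles n k) \<and>
           (\<forall>x\<in>prices k m. \<forall>x'\<in>prices k m.
              g (nat \<lfloor>real m * x l\<rfloor>) - g (nat \<lfloor>real m * x' l\<rfloor>) =
              (\<Sum>(w, y)\<in>S. w * (Rev sel k s n x y - Rev sel k s n x' y)))"
proof -
  obtain w where w_nonneg: "\<forall>t\<in>{1..m}. 0 \<le> w t"
    and w_sum: "\<forall>u\<in>{1..m}. (\<Sum>t\<in>{1..m}. w t * (if u \<le> t then real u / real m else 0)) = g u + real m"
    using threshold_weights[OF g m] by blast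
  define y where "y t = single_item_profile k l (real t / real m)" for t
  define S where "S = (\<lambda>t. (w t, y t)) ` {1..m}"
  have inj: "inj_on (\<lambda>t. (w t, y t)) {1..m}"
  proof (rule inj_onI)
    fix t t' assume "(w t, y t) = (w t', y t')"
    then have "y t 0 {l} = y t' 0 {l}" by simp
    then show "t = t'" using l m by (simp add: y_def single_item_profile_def)
  qed
  have revenue_sum: "(\<Sum>t\<in>{1..m}. w t * Rev sel k s n x (y t)) = g (nat \<lfloor>real m * x l\<rfloor>) + real m"
    if x: "x \<in> prices k m" for x
  proof -
    obtain u where u: "1 \<le> u" "u \<le> m" "x l = real u / real m" "nat \<lfloor>real m * x l\<rfloor> = u"
      using prices_level[OF x l(1) m] by blast
    have "Rev sel k s n x (y t) = (if u \<le> t then real u / real m else 0)" for t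
      using Rev_single_item[of x k m l s n sel, OF x m l n sel] u(3) m by (simp add: y_def divide_le_cancel)
    then show ?thesis using w_sum u by simp
  qed
  show ?thesis
  proof (intro exI[of _ S] conjI ballI)
    show "finite S" unfolding S_def by simp
    show "card S \<le> m" unfolding S_def using card_image_le[of "{1..m}"] by simp
    show "case p of (w, y) \<Rightarrow> 0 \<le> w \<and> y \<in> profiles n k" if "p \<in> S" for p
      using that w_nonneg single_item_profile_in_profiles[OF n] unfolding S_def y_def by auto
  next
    fix x x' assume x: "x \<in> prices k m" and x': "x' \<in> prices k m"
    have "(\<Sum>(w, y)\<in>S. w * (Rev sel k s n x y - Rev sel k s n x' y))
        = (\<Sum>t\<in>{1..m}. w t * Rev sel k s n x (y t)) - (\<Sum>t\<in>{1..m}. w t * Rev sel k s n x' (y t))"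
      unfolding S_def by (subst sum.reindex[OF inj]) (simp add: right_diff_distrib sum_subtractf)
    then show "g (nat \<lfloor>real m * x l\<rfloor>) - g (nat \<lfloor>real m * x' l\<rfloor>) =
        (\<Sum>(w, y)\<in>S. w * (Rev sel k s n x y - Rev sel k s n x' y))"
      using revenue_sum[OF x] revenue_sum[OF x'] by simp
  qed
qed

lemma le_two_power_bitlen: "1 \<le> m \<Longrightarrow> m \<le> 2 ^ bitlen m"
proof -
  assume m: "1 \<le> m"
  have "0 \<le> log 2 (real m)" using m by simp
  then have "real m = 2 powr (log 2 (real m))" using m by simp
  also have "\<dots> \<le> 2 powr (real (bitlen m))"
    unfolding bitlen_def using \<open>0 \<le> log 2 (real m)\<close>
    by (intro powr_mono) (auto simp: le_of_int_ceiling)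
  also have "\<dots> = 2 ^ bitlen m" by (simp add: powr_realpow)
  finally show ?thesis by (metis of_nat_le_iff of_nat_numeral of_nat_power)
qed

text \<open>Positivity is what makes \<open>u = 2\<^sup>L\<close> harmless: it is the only admissible value with no
  nonzero bit below \<open>L\<close>.\<close>

lemma low_bit_differs:
  fixes u u' L :: nat
  assumes "1 \<le> u" "u \<le> 2 ^ L" "1 \<le> u'" "u' \<le> 2 ^ L" "u \<noteq> u'"
  shows "\<exists>b<L. (u div 2 ^ b) mod 2 \<noteq> (u' div 2 ^ b) mod 2"
proof -
  have "u mod 2 ^ L \<noteq> u' mod 2 ^ L"
    using assms by (cases "u = 2 ^ L"; cases "u' = 2 ^ L") auto
  then have "take_bit L u \<noteq> take_bit L u'" by (simp add: take_bit_eq_mod)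
  then obtain b where "bit (take_bit L u) b \<noteq> bit (take_bit L u') b" using bit_eq_iff by blast
  then have "b < L" "bit u b \<noteq> bit u' b" by (auto simp: bit_take_bit_iff)
  then show ?thesis by (auto simp: bit_iff_odd odd_iff_mod_2_eq_one)
qed

lemma Gamma_IP_01: "Gamma_IP m a j \<in> {0, 1}"
  unfolding Gamma_IP_def Let_def by auto

lemma Gamma_IP_column:
  "b < bitlen m \<Longrightarrow> Gamma_IP m a (l * bitlen m + b) = real ((nat \<lfloor>real m * a l\<rfloor> div 2 ^ b) mod 2)"
  unfolding Gamma_IP_def Let_def by simp

lemma admissible_Gamma_IP:
  assumes m: "1 \<le> m"
  shows "admissible (prices k m) (k * bitlen m) (Gamma_IP m) 2 1"
  unfolding admissible_def
proof (intro conjI ballI allI impI)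
  fix x x' assume x: "x \<in> prices k m" and x': "x' \<in> prices k m" and "x \<noteq> x'"
  then obtain l where "x l \<noteq> x' l" by blast
  moreover have "l < k" using prices_outside[OF x] prices_outside[OF x'] calculation
    by (metis not_le)
  ultimately obtain u u' where u: "1 \<le> u" "u \<le> m" "nat \<lfloor>real m * x l\<rfloor> = u"
    and u': "1 \<le> u'" "u' \<le> m" "nat \<lfloor>real m * x' l\<rfloor> = u'" and "u \<noteq> u'"
    using prices_level[OF x _ m] prices_level[OF x' _ m] by metis
  then obtain b where b: "b < bitlen m" "(u div 2 ^ b) mod 2 \<noteq> (u' div 2 ^ b) mod 2"
    using low_bit_differs[of u "bitlen m" u'] le_two_power_bitlen[OF m] by auto
  have "l * bitlen m + b < k * bitlen m"
  proof -
    have "l * bitlen m + b < (l + 1) * bitlen m" using b by simp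
    also have "\<dots> \<le> k * bitlen m" using \<open>l < k\<close> by (intro mult_right_mono) auto
    finally show ?thesis .
  qed
  moreover have "Gamma_IP m x (l * bitlen m + b) \<noteq> Gamma_IP m x' (l * bitlen m + b)"
    using Gamma_IP_column[OF b(1)] u(3) u'(3) b(2) by simp
  ultimately show "\<exists>j<k * bitlen m. Gamma_IP m x j \<noteq> Gamma_IP m x' j" by blast
next
  fix j
  have range_01: "(\<lambda>x. Gamma_IP m x j) ` prices k m \<subseteq> {0, 1}" using Gamma_IP_01 by blast
  then show "finite ((\<lambda>x. Gamma_IP m x j) ` prices k m)" by (rule finite_subset) simp
  show "card ((\<lambda>x. Gamma_IP m x j) ` prices k m) \<le> 2"
    using card_mono[OF _ range_01] by simp
next
  fix j x x' assume "Gamma_IP m x j \<noteq> Gamma_IP m x' j"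
  then show "1 \<le> \<bar>Gamma_IP m x j - Gamma_IP m x' j\<bar>"
    using Gamma_IP_01[of m x j] Gamma_IP_01[of m x' j] by auto
qed

theorem lemma3p4:
  fixes k n m :: nat and s :: "nat \<Rightarrow> enat" and sel :: "nat set set \<Rightarrow> nat set"
  assumes "1 \<le> m" and "1 \<le> n" and "\<forall>l<k. 1 \<le> s l"
    and "\<forall>B. B \<noteq> {} \<longrightarrow> sel B \<in> B"
  shows "admissible (prices k m) (k * bitlen m) (Gamma_IP m) 2 1 \<and>
         implementable (prices k m) (profiles n k) (\<lambda>a v. Rev sel k s n a v)
           (k * bitlen m) (Gamma_IP m) m"
proof
  show "admissible (prices k m) (k * bitlen m) (Gamma_IP m) 2 1"
    using admissible_Gamma_IP[OF assms(1)] .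
  show "implementable (prices k m) (profiles n k) (\<lambda>a v. Rev sel k s n a v)
      (k * bitlen m) (Gamma_IP m) m"
    unfolding implementable_def
  proof (intro allI impI)
    fix j assume j: "j < k * bitlen m"
    then have "j div bitlen m < k" by (simp add: less_mult_imp_div_less)
    have bit_01: "\<forall>u. 0 \<le> real ((u div 2 ^ (j mod bitlen m)) mod 2) \<and>
        real ((u div 2 ^ (j mod bitlen m)) mod 2) \<le> 1"
      by (simp add: mod_2_eq_odd)
    from implementable_column[OF assms(1,2) \<open>j div bitlen m < k\<close> _ assms(4) bit_01, of s]
    show "\<exists>S :: (real \<times> (nat \<Rightarrow> nat set \<Rightarrow> real)) set. finite S \<and> card S \<le> m \<and>
        (\<forall>(w, y)\<in>S. 0 \<le> w \<and> y \<in> profiles n k) \<and>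
        (\<forall>x\<in>prices k m. \<forall>x'\<in>prices k m. Gamma_IP m x j - Gamma_IP m x' j =
           (\<Sum>(w, y)\<in>S. w * (Rev sel k s n x y - Rev sel k s n x' y)))"
      using assms(3) \<open>j div bitlen m < k\<close> by (simp add: Gamma_IP_def Let_def)
  qed
qed

end
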